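(* Let $r\ge1$ and let $A,B$ be integers with $0\le B<A\le r$. For all real numbers $v_0,v_1,\dots,v_r$, $$\sum_{i=B}^{A}\ \prod_{\alpha=0}^{i-1}(v_A-v_\alpha)\prod_{\beta=i+1}^{r}(v_B-v_\beta)=0,$$ where an empty product (e.g. $\prod_{\alpha=0}^{-1}$ or $\prod_{\beta=r+1}^{r}$) equals $1$. *)

theory Defs
  imports Complex_Main
begin

end

theory Submission
  imports Defs
begin

text \<open>With \<open>a\<^sub>\<alpha> = v\<^sub>A - v\<^sub>\<alpha>\<close> and \<open>b\<^sub>\<beta> = v\<^sub>B - v\<^sub>\<beta>\<close> we have \<open>a\<^sub>i - b\<^sub>i = v\<^sub>A - v\<^sub>B\<close> for every \<open>i\<close>,
  so \<open>(v\<^sub>A - v\<^sub>B)\<close> times the sum over all \<open>0 \<le> i \<le> r\<close> telescopes to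
  \<open>\<Prod>\<alpha>\<le>r. a\<^sub>\<alpha> - \<Prod>\<beta>\<le>r. b\<^sub>\<beta>\<close>, which is \<open>0 - 0\<close> because \<open>a\<^sub>A = b\<^sub>B = 0\<close>.
  The summands with \<open>i < B\<close> contain the factor \<open>b\<^sub>B\<close> and those with \<open>i > A\<close> the factor \<open>a\<^sub>A\<close>,
  so the full sum is the sum over \<open>B \<le> i \<le> A\<close>. If \<open>v\<^sub>A = v\<^sub>B\<close> we cannot cancel \<open>v\<^sub>A - v\<^sub>B\<close>,
  but then every summand vanishes: for \<open>i = B\<close> through the factor \<open>b\<^sub>A\<close>, for \<open>i > B\<close> through \<open>a\<^sub>B\<close>.\<close>

lemma prod_diff_telescope:
  fixes a b :: "nat \<Rightarrow> 'a::comm_ring_1"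
  shows "(\<Sum>i<n. (\<Prod>\<alpha><i. a \<alpha>) * (a i - b i) * (\<Prod>\<beta> = Suc i..<n. b \<beta>))
         = (\<Prod>\<alpha><n. a \<alpha>) - (\<Prod>\<beta><n. b \<beta>)"
proof -
  define f where "f i = (\<Prod>\<alpha><i. a \<alpha>) * (\<Prod>\<beta> = i..<n. b \<beta>)" for i
  have "(\<Prod>\<alpha><i. a \<alpha>) * (a i - b i) * (\<Prod>\<beta> = Suc i..<n. b \<beta>) = f (Suc i) - f i" if "i < n" for i
    using that by (simp add: f_def prod.atLeast_Suc_lessThan algebra_simps)
  then have "(\<Sum>i<n. (\<Prod>\<alpha><i. a \<alpha>) * (a i - b i) * (\<Prod>\<beta> = Suc i..<n. b \<beta>))
             = (\<Sum>i<n. f (Suc i) - f i)"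
    by (intro sum.cong) auto
  also have "\<dots> = f n - f 0"
    by (rule sum_lessThan_telescope)
  finally show ?thesis
    by (simp add: f_def atLeast0LessThan)
qed

lemma diff_mult_sum_nodal_products:
  fixes v :: "nat \<Rightarrow> 'a::comm_ring_1"
  shows "(x - y) * (\<Sum>i\<le>r. (\<Prod>\<alpha> = 0..<i. x - v \<alpha>) * (\<Prod>\<beta> = i+1..r. y - v \<beta>))
         = (\<Prod>\<alpha>\<le>r. x - v \<alpha>) - (\<Prod>\<beta>\<le>r. y - v \<beta>)"
  using prod_diff_telescope[of "\<lambda>\<alpha>. x - v \<alpha>" "\<lambda>\<beta>. y - v \<beta>" "Suc r"]
  by (simp add: sum_distrib_left atLeast0LessThan lessThan_Suc_atMost
      atLeastLessThanSuc_atLeastAtMost mult_ac)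

theorem mainTheorem3:
  fixes r A B :: nat and v :: "nat \<Rightarrow> real"
  assumes "r \<ge> 1" and "B < A" and "A \<le> r"
  shows "(\<Sum>i = B..A. (\<Prod>\<alpha> = 0..<i. v A - v \<alpha>) * (\<Prod>\<beta> = i+1..r. v B - v \<beta>)) = 0"
proof -
  define t where "t i = (\<Prod>\<alpha> = 0..<i. v A - v \<alpha>) * (\<Prod>\<beta> = i+1..r. v B - v \<beta>)" for i
  have t_outside: "t i = 0" if "i \<le> r" "i \<notin> {B..A}" for i
    using that assms by (cases "i < B") (auto simp: t_def prod_zero_iff)
  show ?thesis
  proof (cases "v A = v B")
    case True
    have "t i = 0" if "i \<in> {B..A}" for i
      using that assms True
      by (cases "i = B") (auto simp: t_def prod_zero_iff intro: bexI[of _ A])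
    then have "sum t {B..A} = 0"
      by simp
    then show ?thesis
      by (simp add: t_def)
  next
    case False
    have "sum t {B..A} = sum t {..r}"
      by (rule sum.mono_neutral_left) (use assms t_outside in auto)
    moreover have "(v A - v B) * sum t {..r} = (\<Prod>\<alpha>\<le>r. v A - v \<alpha>) - (\<Prod>\<beta>\<le>r. v B - v \<beta>)"
      unfolding t_def by (rule diff_mult_sum_nodal_products)
    moreover have "(\<Prod>\<alpha>\<le>r. v A - v \<alpha>) = 0" and "(\<Prod>\<beta>\<le>r. v B - v \<beta>) = 0"
      using assms by (auto simp: prod_zero_iff)
    ultimately show ?thesis
      using False by (simp add: t_def)
  qed
qed

end
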